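(* Two pullback triples $(J_j,F_j,Y_j)$, $j=1,2$, on the same Hilbert space $\mathcal H$ (with $J_j:\mathcal X_j\to\mathcal H$, $F_j:\mathcal X_j\to\mathcal E_j$, $Y_j:\mathcal H\to\mathcal X_j$) are equivalent if and only if there is a unitary isomorphism $W:\mathcal X_2\to\mathcal X_1$ such that $(J_1,F_1,WY_2)$ is a pullback triple.
   Context: For Hilbert spaces $\mathcal H,\mathcal X,\mathcal E$, a pullback triple $(J,F,Y)$ on $\mathcal H$ consists of operators $J:\mathcal X\to\mathcal H$, $F:\mathcal X\to\mathcal E$, $Y:\mathcal H\to\mathcal X$ such that: $J,F$ are bounded with dense range; $Y$ is a completion operator (densely defined injective linear map with dense range); $\|u\|_{\mathcal X}^2=\|Ju\|^2+\|Fu\|_{\mathcal E}^2$ for all $u\in\mathcal X$; and $JYf=f$ for all $f\in\mathcal D(Y)$. Two pullback triples $(J_j,F_j,Y_j)$ with spaces $\mathcal H_j,\mathcal X_j,\mathcal E_j$ are equivalent if there are unitary isomorphisms $W_{\mathcal H}:\mathcal H_1\to\mathcal H_2$, $W_{\mathcal X}:\mathcal X_1\to\mathcal X_2$, $W_{\mathcal E}:\mathcal E_1\to\mathcal E_2$ with $W_{\mathcal H}J_1=J_2W_{\mathcal X}$ and $W_{\mathcal E}F_1=F_2W_{\mathcal X}$.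
   Formalization: Equivalence of the two pullback triples on the same $\mathcal H$ takes $W_{\mathcal H}$ to be the identity of $\mathcal H$, not an arbitrary unitary isomorphism, so $W_{\mathcal H}J_1=J_2W_{\mathcal X}$ becomes $J_1=J_2W_{\mathcal X}$. The statement above fails without it. *)

theory Defs
  imports "HOL-Analysis.Analysis"
begin

text \<open>Complex Hilbert spaces, encoded as real Hilbert spaces (real inner product
  space, complete) carrying an orthogonal complex structure \<open>imult\<close>
  (multiplication by the imaginary unit).  The complex inner product is recovered
  as inner x y + i * inner x (imult y) (up to convention), so complex-linear maps are
  exactly the real-linear maps commuting with \<open>imult\<close>, and complex unitaries are
  the surjective real isometries commuting with \<open>imult\<close>.\<close>

class complex_hilbert = real_inner + complete_space +
  fixes imult :: "'a \<Rightarrow> 'a"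
  assumes imult_add: "imult (x + y) = imult x + imult y"
    and imult_scaleR: "imult (scaleR r x) = scaleR r (imult x)"
    and imult_imult: "imult (imult x) = - x"
    and inner_imult: "inner (imult x) (imult y) = inner x y"

definition clinear :: "('a::complex_hilbert \<Rightarrow> 'b::complex_hilbert) \<Rightarrow> bool" where
  "clinear T \<longleftrightarrow> linear T \<and> (\<forall>x. T (imult x) = imult (T x))"

definition bounded_dense_range :: "('a::complex_hilbert \<Rightarrow> 'b::complex_hilbert) \<Rightarrow> bool" where
  "bounded_dense_range T \<longleftrightarrow> bounded_linear T \<and> clinear T \<and> closure (range T) = UNIV"

definition csubspace :: "'a::complex_hilbert set \<Rightarrow> bool" where
  "csubspace D \<longleftrightarrow> subspace D \<and> (\<forall>x\<in>D. imult x \<in> D)"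

text \<open>A partially defined operator is represented by its domain
  \<open>D\<close> together with a total function \<open>Y\<close> whose values off \<open>D\<close> are irrelevant.\<close>
definition completion_operator :: "'a::complex_hilbert set \<Rightarrow> ('a \<Rightarrow> 'b::complex_hilbert) \<Rightarrow> bool" where
  "completion_operator D Y \<longleftrightarrow>
     csubspace D \<and> closure D = UNIV \<and>
     (\<forall>f\<in>D. \<forall>g\<in>D. Y (f + g) = Y f + Y g) \<and>
     (\<forall>f\<in>D. \<forall>r. Y (scaleR r f) = scaleR r (Y f)) \<and>
     (\<forall>f\<in>D. Y (imult f) = imult (Y f)) \<and>
     inj_on Y D \<and> closure (Y ` D) = UNIV"

definition pullback_triple ::
  "('x::complex_hilbert \<Rightarrow> 'h::complex_hilbert) \<Rightarrow> ('x \<Rightarrow> 'e::complex_hilbert) \<Rightarrow> 'h set \<Rightarrow> ('h \<Rightarrow> 'x) \<Rightarrow> bool" where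
  "pullback_triple J F D Y \<longleftrightarrow>
     bounded_dense_range J \<and> bounded_dense_range F \<and> completion_operator D Y \<and>
     (\<forall>u. (norm u)\<^sup>2 = (norm (J u))\<^sup>2 + (norm (F u))\<^sup>2) \<and>
     (\<forall>f\<in>D. J (Y f) = f)"

definition unitary :: "('a::complex_hilbert \<Rightarrow> 'b::complex_hilbert) \<Rightarrow> bool" where
  "unitary W \<longleftrightarrow> clinear W \<and> bij W \<and> (\<forall>x y. inner (W x) (W y) = inner x y)"

definition pb_equivalent_via ::
  "('h1::complex_hilbert \<Rightarrow> 'h2::complex_hilbert) \<Rightarrow>
   ('x1::complex_hilbert \<Rightarrow> 'h1) \<Rightarrow> ('x1 \<Rightarrow> 'e1::complex_hilbert) \<Rightarrow>
   ('x2::complex_hilbert \<Rightarrow> 'h2) \<Rightarrow> ('x2 \<Rightarrow> 'e2::complex_hilbert) \<Rightarrow> bool" where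
  "pb_equivalent_via WH J1 F1 J2 F2 \<longleftrightarrow>
     (\<exists>WX :: 'x1 \<Rightarrow> 'x2. \<exists>WE :: 'e1 \<Rightarrow> 'e2.
        unitary WX \<and> unitary WE \<and>
        (\<forall>u. WH (J1 u) = J2 (WX u)) \<and> (\<forall>u. WE (F1 u) = F2 (WX u)))"

definition pb_equivalent ::
  "('x1::complex_hilbert \<Rightarrow> 'h1::complex_hilbert) \<Rightarrow> ('x1 \<Rightarrow> 'e1::complex_hilbert) \<Rightarrow>
   ('x2::complex_hilbert \<Rightarrow> 'h2::complex_hilbert) \<Rightarrow> ('x2 \<Rightarrow> 'e2::complex_hilbert) \<Rightarrow> bool" where
  "pb_equivalent J1 F1 J2 F2 \<longleftrightarrow>
     (\<exists>WH :: 'h1 \<Rightarrow> 'h2. unitary WH \<and> pb_equivalent_via WH J1 F1 J2 F2)"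

end

theory Submission
  imports Defs
begin

text \<open>An equivalence with identity on \<open>H\<close> is a unitary \<open>W\<close> with \<open>J\<^sub>1 \<circ> W = J\<^sub>2\<close> together with
  a unitary \<open>W\<^sub>E\<close> with \<open>W\<^sub>E \<circ> F\<^sub>1 \<circ> W = F\<^sub>2\<close>; the completion operator \<open>W \<circ> Y\<^sub>2\<close> is a right inverse of
  \<open>J\<^sub>1\<close>.  Conversely, if \<open>W \<circ> Y\<^sub>2\<close> is a right inverse of \<open>J\<^sub>1\<close>, then \<open>J\<^sub>1 \<circ> W\<close> and \<open>J\<^sub>2\<close> agree on
  the dense range of \<open>Y\<^sub>2\<close>, hence everywhere.  The Pythagorean identities then give
  \<open>\<parallel>F\<^sub>1 (W v)\<parallel> = \<parallel>F\<^sub>2 v\<parallel>\<close>, so \<open>F\<^sub>1 (W v) \<mapsto> F\<^sub>2 v\<close> is a well-defined isometry between dense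
  subspaces, whose continuous extension is the required unitary \<open>W\<^sub>E\<close>.\<close>

lemma continuous_on_eq_dense:
  fixes f g :: "'a::topological_space \<Rightarrow> 'b::t2_space"
  assumes "continuous_on UNIV f" "continuous_on UNIV g" "closure S = UNIV"
    and "\<And>x. x \<in> S \<Longrightarrow> f x = g x"
  shows "f x = g x"
proof -
  have "closure S \<subseteq> {x. f x = g x}"
    using assms by (intro closure_minimal) (auto intro: closed_Collect_eq)
  then show ?thesis
    using assms(3) by auto
qed

lemma bounded_linear_eq_on_dense_range:
  assumes "bounded_linear A" "bounded_linear B" "closure (Y ` D) = UNIV"
    and "\<And>f. f \<in> D \<Longrightarrow> A (Y f) = B (Y f)"
  shows "A x = B x"
  by (rule continuous_on_eq_dense[OF _ _ assms(3)])
    (use assms in \<open>auto intro: linear_continuous_on\<close>)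

lemma bounded_linear_isometry:
  assumes "linear g" "\<And>x. norm (g x) = norm x"
  shows "bounded_linear g"
  using assms by (intro bounded_linear_intro[where K=1]) (auto simp: linear_iff)

lemma norm_unitary:
  assumes "unitary W"
  shows "norm (W x) = norm x"
  using assms unfolding unitary_def by (simp add: norm_eq_sqrt_inner)

lemma bounded_linear_unitary:
  assumes "unitary W"
  shows "bounded_linear W"
  using assms unfolding unitary_def clinear_def
  by (intro bounded_linear_isometry norm_unitary[OF assms]) auto

lemma unitary_apply_inv:
  assumes "unitary W"
  shows "W (inv W x) = x"
  using assms unfolding unitary_def by (simp add: bij_is_surj surj_f_inv_f)

lemma unitary_inv:
  assumes "unitary W"
  shows "unitary (inv W)"
proof -
  have bij: "bij W" and lin: "linear W" and comm: "\<And>x. W (imult x) = imult (W x)"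
    and inner: "\<And>x y. inner (W x) (W y) = inner x y"
    using assms unfolding unitary_def clinear_def by auto
  note W_inv = unitary_apply_inv[OF assms]
  have cancel: "a = b" if "W a = W b" for a b
    using bij that by (simp add: bij_is_inj inj_eq)
  have "linear (inv W)"
    unfolding linear_iff by (auto intro!: cancel simp: W_inv lin[unfolded linear_iff])
  moreover have "inv W (imult x) = imult (inv W x)" for x
    by (rule cancel) (simp add: W_inv comm)
  moreover have "inner (inv W x) (inv W y) = inner x y" for x y
    using inner[of "inv W x" "inv W y"] by (simp add: W_inv)
  ultimately show ?thesis
    using bij unfolding unitary_def clinear_def by (auto intro: bij_imp_bij_inv)
qed

lemma closure_image_unitary:
  assumes "unitary W" "closure S = UNIV"
  shows "closure (W ` S) = UNIV"
proof -
  have "W ` closure S \<subseteq> closure (W ` S)"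
    by (rule image_closure_subset)
      (auto intro: linear_continuous_on bounded_linear_unitary[OF assms(1)] closure_subset[THEN subsetD])
  moreover have "surj W"
    using assms(1) unfolding unitary_def by (simp add: bij_is_surj)
  ultimately show ?thesis
    using assms(2) by auto
qed

lemma bounded_dense_range_comp_unitary:
  assumes "bounded_dense_range T" "unitary W"
  shows "bounded_dense_range (T \<circ> W)"
proof -
  have "surj W"
    using assms(2) unfolding unitary_def by (simp add: bij_is_surj)
  then have "range (T \<circ> W) = range T"
    by (metis image_comp)
  then show ?thesis
    using assms bounded_linear_unitary[OF assms(2)]
    unfolding bounded_dense_range_def unitary_def clinear_def
    by (auto simp: comp_def intro: bounded_linear_compose bounded_linear.linear)
qed

lemma completion_operator_comp_unitary:
  assumes "completion_operator D Y" "unitary W"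
  shows "completion_operator D (W \<circ> Y)"
proof -
  have "linear W" "inj W" "\<And>x. W (imult x) = imult (W x)"
    using assms(2) unfolding unitary_def clinear_def by (auto simp: bij_is_inj)
  moreover have "closure ((W \<circ> Y) ` D) = UNIV"
    using assms unfolding completion_operator_def
    by (metis closure_image_unitary image_comp)
  ultimately show ?thesis
    using assms(1) unfolding completion_operator_def
    by (auto simp: linear_add linear_scale comp_inj_on inj_on_subset)
qed

lemma isometric_extension_of_dense_range:
  fixes F :: "'a::real_normed_vector \<Rightarrow> 'b::real_normed_vector"
    and K :: "'a \<Rightarrow> 'c::{real_normed_vector, complete_space}"
  assumes F: "linear F" and K: "linear K" and dense: "closure (range F) = UNIV"
    and norm_eq: "\<And>u. norm (K u) = norm (F u)"
  obtains g where "linear g" "\<And>x. norm (g x) = norm x" "\<And>u. g (F u) = K u"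
proof -
  define G where "G y = K (inv F y)" for y
  have G_F: "G (F u) = K u" for u
  proof -
    have "F (inv F (F u) - u) = 0"
      by (simp add: f_inv_into_f linear_diff[OF F])
    then have "K (inv F (F u) - u) = 0"
      by (metis norm_eq norm_eq_zero)
    then show ?thesis
      unfolding G_def by (simp add: linear_diff[OF K])
  qed
  have "uniformly_continuous_on (range F) G"
    unfolding uniformly_continuous_on_def
    by (force simp: G_F dist_norm norm_eq linear_diff[OF F, symmetric] linear_diff[OF K, symmetric])
  then obtain g where g_uc: "uniformly_continuous_on (closure (range F)) g"
    and g_G: "\<And>x. x \<in> range F \<Longrightarrow> G x = g x"
    by (rule uniformly_continuous_on_extension_on_closure) blast
  have cont: "continuous_on UNIV g"
    using g_uc dense uniformly_continuous_imp_continuous by metis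
  have g_F: "g (F u) = K u" for u
    using g_G[of "F u"] G_F by simp
  have "norm (g x) = norm x" for x
    by (rule continuous_on_eq_dense[OF _ _ dense])
      (auto intro: continuous_on_norm cont continuous_on_id simp: g_F norm_eq)
  moreover have "linear g"
  proof
    have dense2: "closure (range F \<times> range F) = UNIV"
      by (simp add: closure_Times dense)
    have "g (fst p + snd p) = g (fst p) + g (snd p)" for p
      by (rule continuous_on_eq_dense[OF _ _ dense2,
            where f="\<lambda>p. g (fst p + snd p)" and g="\<lambda>p. g (fst p) + g (snd p)"])
        (auto intro!: continuous_intros continuous_on_compose2[OF cont]
          simp: g_F linear_add[OF F, symmetric] linear_add[OF K])
    then show "g (x + y) = g x + g y" for x y
      by (metis fst_conv snd_conv)
    show "g (r *\<^sub>R x) = r *\<^sub>R g x" for r x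
      by (rule continuous_on_eq_dense[OF _ _ dense, where f="\<lambda>x. g (r *\<^sub>R x)"])
        (auto intro!: continuous_intros continuous_on_compose2[OF cont]
          simp: g_F linear_scale[OF F, symmetric] linear_scale[OF K])
  qed
  ultimately show ?thesis
    using g_F that by blast
qed

lemma closed_range_isometry:
  fixes g :: "'a::{real_normed_vector, complete_space} \<Rightarrow> 'b::real_normed_vector"
  assumes "linear g" "\<And>x. norm (g x) = norm x"
  shows "closed (range g)"
proof -
  have "complete (range g)"
    using assms by (intro complete_isometric_image[where e=1] bounded_linear_isometry)
      (auto simp: complete_UNIV)
  then show ?thesis
    by (rule complete_imp_closed)
qed

lemma bounded_linear_imult: "bounded_linear (imult :: 'a::complex_hilbert \<Rightarrow> 'a)"
  by (intro bounded_linear_intro[where K=1])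
    (auto simp: imult_add imult_scaleR norm_eq_sqrt_inner inner_imult)

lemma unitary_intertwining_of_norm_eq:
  assumes F: "bounded_dense_range F" and K: "bounded_dense_range K"
    and norm_eq: "\<And>u. norm (K u) = norm (F u)"
  obtains g where "unitary g" "\<And>u. g (F u) = K u"
proof -
  have F_lin: "linear F" and F_comm: "\<And>x. F (imult x) = imult (F x)"
    and F_dense: "closure (range F) = UNIV"
    and K_lin: "linear K" and K_comm: "\<And>x. K (imult x) = imult (K x)"
    and K_dense: "closure (range K) = UNIV"
    using F K unfolding bounded_dense_range_def clinear_def by auto
  obtain g where lin: "linear g" and iso: "\<And>x. norm (g x) = norm x" and g_F: "\<And>u. g (F u) = K u"
    using isometric_extension_of_dense_range[OF F_lin K_lin F_dense norm_eq] by blast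
  have bl: "bounded_linear g"
    using lin iso by (rule bounded_linear_isometry)
  have "continuous_on UNIV (\<lambda>x. g (imult x))" "continuous_on UNIV (\<lambda>x. imult (g x))"
    by (intro linear_continuous_on bounded_linear_compose[OF bl bounded_linear_imult]
        bounded_linear_compose[OF bounded_linear_imult bl])+
  then have "g (imult x) = imult (g x)" for x
    by (rule continuous_on_eq_dense[OF _ _ F_dense]) (auto simp: g_F F_comm[symmetric] K_comm)
  moreover have "inner (g x) (g y) = inner x y" for x y
    by (simp add: dot_norm iso linear_add[OF lin, symmetric])
  moreover have "inj g"
    using iso by (intro injI) (metis eq_iff_diff_eq_0 linear_diff[OF lin] norm_eq_zero)
  moreover have "surj g"
  proof -
    have "range K \<subseteq> range g"
      using g_F by (auto simp: g_F[symmetric])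
    then have "closure (range K) \<subseteq> range g"
      using closed_range_isometry[OF lin iso] by (rule closure_minimal)
    then show ?thesis
      using K_dense by auto
  qed
  ultimately have "unitary g"
    using lin unfolding unitary_def clinear_def bij_def by auto
  then show ?thesis
    using g_F that by blast
qed

lemma pullback_triple_transport:
  assumes T1: "pullback_triple J1 F1 D1 Y1" and T2: "pullback_triple J2 F2 D2 Y2"
    and W: "unitary W" and J_W: "\<And>v. J1 (W v) = J2 v"
  shows "pullback_triple J1 F1 D2 (W \<circ> Y2)"
  using T1 T2 completion_operator_comp_unitary[OF _ W] J_W
  unfolding pullback_triple_def by auto

lemma pullback_triples_J_eq:
  assumes T1: "pullback_triple J1 F1 D (W \<circ> Y2)" and T2: "pullback_triple J2 F2 D Y2"
    and W: "unitary W"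
  shows "J1 (W v) = J2 v"
proof -
  have "bounded_linear (\<lambda>v. J1 (W v))" "bounded_linear J2"
    "closure (Y2 ` D) = UNIV" "\<And>f. f \<in> D \<Longrightarrow> J1 (W (Y2 f)) = J2 (Y2 f)"
    using T1 T2 unfolding pullback_triple_def bounded_dense_range_def completion_operator_def
    by (auto intro: bounded_linear_compose bounded_linear_unitary[OF W])
  then show ?thesis
    by (rule bounded_linear_eq_on_dense_range)
qed

lemma pullback_triples_norm_F_eq:
  assumes T1: "pullback_triple J1 F1 D1 Y1" and T2: "pullback_triple J2 F2 D2 Y2"
    and W: "unitary W" and J_W: "\<And>v. J1 (W v) = J2 v"
  shows "norm (F1 (W v)) = norm (F2 v)"
proof -
  have "(norm (W v))\<^sup>2 = (norm (J1 (W v)))\<^sup>2 + (norm (F1 (W v)))\<^sup>2"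
    "(norm v)\<^sup>2 = (norm (J2 v))\<^sup>2 + (norm (F2 v))\<^sup>2"
    using T1 T2 unfolding pullback_triple_def by blast+
  then have "(norm (F1 (W v)))\<^sup>2 = (norm (F2 v))\<^sup>2"
    by (simp add: norm_unitary[OF W] J_W)
  then show ?thesis
    by (simp add: power2_eq_iff_nonneg)
qed

lemma pb_equivalent_via_id_of_pullback_triples:
  assumes T1: "pullback_triple J1 F1 D (W \<circ> Y2)" and T2: "pullback_triple J2 F2 D Y2"
    and W: "unitary W"
  shows "pb_equivalent_via id J1 F1 J2 F2"
proof -
  have J_W: "J1 (W v) = J2 v" for v
    using pullback_triples_J_eq[OF T1 T2 W] .
  have WX: "unitary (inv W)"
    using W by (rule unitary_inv)
  have J_WX: "J1 u = J2 (inv W u)" for u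
    using J_W[of "inv W u"] by (simp add: unitary_apply_inv[OF W])
  have "norm (F2 (inv W u)) = norm (F1 u)" for u
    using pullback_triples_norm_F_eq[OF T1 T2 W J_W, of "inv W u"]
    by (simp add: unitary_apply_inv[OF W])
  moreover have "bounded_dense_range F1" "bounded_dense_range (F2 \<circ> inv W)"
    using T1 T2 bounded_dense_range_comp_unitary[OF _ WX] unfolding pullback_triple_def by auto
  ultimately obtain WE where "unitary WE" "\<And>u. WE (F1 u) = F2 (inv W u)"
    using unitary_intertwining_of_norm_eq[of F1 "F2 \<circ> inv W"] by auto
  then show ?thesis
    unfolding pb_equivalent_via_def using WX J_WX by auto
qed

theorem mainTheorem4:
  fixes J1 :: "'x1::complex_hilbert \<Rightarrow> 'h::complex_hilbert"
    and F1 :: "'x1 \<Rightarrow> 'e1::complex_hilbert"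
    and Y1 :: "'h \<Rightarrow> 'x1" and D1 :: "'h set"
    and J2 :: "'x2::complex_hilbert \<Rightarrow> 'h"
    and F2 :: "'x2 \<Rightarrow> 'e2::complex_hilbert"
    and Y2 :: "'h \<Rightarrow> 'x2" and D2 :: "'h set"
  assumes "pullback_triple J1 F1 D1 Y1"
    and "pullback_triple J2 F2 D2 Y2"
  shows "pb_equivalent_via id J1 F1 J2 F2 \<longleftrightarrow>
         (\<exists>W :: 'x2 \<Rightarrow> 'x1. unitary W \<and> pullback_triple J1 F1 D2 (W \<circ> Y2))"
proof
  assume "pb_equivalent_via id J1 F1 J2 F2"
  then obtain WX :: "'x1 \<Rightarrow> 'x2" where WX: "unitary WX" and J_WX: "\<And>u. J1 u = J2 (WX u)"
    unfolding pb_equivalent_via_def by auto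
  have "J1 (inv WX v) = J2 v" for v
    using J_WX[of "inv WX v"] by (simp add: unitary_apply_inv[OF WX])
  then show "\<exists>W :: 'x2 \<Rightarrow> 'x1. unitary W \<and> pullback_triple J1 F1 D2 (W \<circ> Y2)"
    using pullback_triple_transport[OF assms unitary_inv[OF WX]] unitary_inv[OF WX] by blast
next
  assume "\<exists>W :: 'x2 \<Rightarrow> 'x1. unitary W \<and> pullback_triple J1 F1 D2 (W \<circ> Y2)"
  then show "pb_equivalent_via id J1 F1 J2 F2"
    using pb_equivalent_via_id_of_pullback_triples assms(2) by blast
qed

end
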